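(* Let $R$ be as in the standing setup, and let $x\in R$ with $v(x)=e$ (so $xR$ is a minimal reduction of $m$). The following are equivalent: (1) The $m$-adic filtration is essentially divisible with respect to $xR$. (2) $v(m^i\cap xR)=v(m^i)\cap v(xR)$ for all $i\ge 0$. (3) $v(m^i+xR)=v(m^i)\cup v(xR)$ for all $i\ge 0$. (4) $b_j=c_j$ for $j=0,\ldots,e-1$.
   Context: Standing setup: $k$ is a field and $R$ is a complete local domain with $k\subseteq R\subseteq k[[t]]$, residue field $k$, maximal ideal $m$, and nonzero conductor $(R:k[[t]])\neq 0$. Let $v$ be the $t$-adic valuation, $S=v(R)=\{v(r): r\in R, r\neq 0\}$, and $e$ the smallest positive element of $S$ (the multiplicity). For a nonzero ideal $I$, $v(I)=\{v(a): a\in I, a\ne0\}$; $m^0=R$. The Apery set of $S$ with respect to $e$ is $\{w_0,\ldots,w_{e-1}\}$ where $w_j$ is the smallest element of $S$ congruent to $j \pmod e$. For $a\in R$, $\operatorname{ord}(a)=\max\{i: a\in m^i\}$; for $s\in S$, $\operatorname{vord}(s)=\max\{i: s\in v(m^i)\}$. Given $x\in R$ with $v(x)=e$, the $m$-adic filtration is essentially divisible with respect to $xR$ if for every $u\in v(xR)$ there is $a\in xR$ with $v(a)=u$ and $\operatorname{ord}(a)=\operatorname{vord}(u)$. Define $b_j=\max\{i: w_j\in v(m^i)\}$ and $c_j=\max\{i: w_j\in v(m^i+xR)\}$ for $j=0,\dots,e-1$. *)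

theory Defs
  imports "HOL-Computational_Algebra.Formal_Power_Series"
begin

text \<open>Standing setup: R is a subring of k[[t]] containing k, local with maximal
ideal m = R \<inter> t k[[t]] (residue field k), with nonzero conductor.\<close>

definition setup_ring :: "'a::field fps set \<Rightarrow> bool" where
  "setup_ring R \<longleftrightarrow>
     (\<forall>c. fps_const c \<in> R) \<and>
     (\<forall>a\<in>R. \<forall>b\<in>R. a + b \<in> R \<and> a * b \<in> R \<and> - a \<in> R) \<and>
     (\<forall>r\<in>R. fps_nth r 0 \<noteq> 0 \<longrightarrow> inverse r \<in> R) \<and>
     (\<exists>f. f \<noteq> 0 \<and> (\<forall>g. f * g \<in> R))"

definition max_ideal :: "'a::field fps set \<Rightarrow> 'a fps set" where
  "max_ideal R = {r \<in> R. fps_nth r 0 = 0}"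

definition ideal_span_R :: "'a::field fps set \<Rightarrow> 'a fps set \<Rightarrow> 'a fps set" where
  "ideal_span_R R S = {(\<Sum>j<(n::nat). r j * s j) | n r s. \<forall>j<n. r j \<in> R \<and> s j \<in> S}"

fun mpow :: "'a::field fps set \<Rightarrow> nat \<Rightarrow> 'a fps set" where
  "mpow R 0 = R"
| "mpow R (Suc i) = ideal_span_R R {a * b | a b. a \<in> max_ideal R \<and> b \<in> mpow R i}"

definition val_set :: "'a::field fps set \<Rightarrow> nat set" where
  "val_set I = {subdegree a | a. a \<in> I \<and> a \<noteq> 0}"

definition prin_ideal :: "'a::field fps set \<Rightarrow> 'a fps \<Rightarrow> 'a fps set" where
  "prin_ideal R x = {x * r | r. r \<in> R}"

definition sum_set :: "'a::field fps set \<Rightarrow> 'a fps set \<Rightarrow> 'a fps set" where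
  "sum_set I J = {a + b | a b. a \<in> I \<and> b \<in> J}"

definition mult_e :: "'a::field fps set \<Rightarrow> nat" where
  "mult_e R = (LEAST s. s \<in> val_set R \<and> 0 < s)"

definition apery :: "'a::field fps set \<Rightarrow> nat \<Rightarrow> nat" where
  "apery R j = (LEAST s. s \<in> val_set R \<and> s mod mult_e R = j)"

definition ord_m :: "'a::field fps set \<Rightarrow> 'a fps \<Rightarrow> nat" where
  "ord_m R a = (GREATEST i. a \<in> mpow R i)"

definition vord :: "'a::field fps set \<Rightarrow> nat \<Rightarrow> nat" where
  "vord R s = (GREATEST i. s \<in> val_set (mpow R i))"

definition ess_divisible :: "'a::field fps set \<Rightarrow> 'a fps \<Rightarrow> bool" where
  "ess_divisible R x \<longleftrightarrow>
     (\<forall>u \<in> val_set (prin_ideal R x). \<exists>a \<in> prin_ideal R x.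
         a \<noteq> 0 \<and> subdegree a = u \<and> ord_m R a = vord R u)"

definition b_idx :: "'a::field fps set \<Rightarrow> nat \<Rightarrow> nat" where
  "b_idx R j = (GREATEST i. apery R j \<in> val_set (mpow R i))"

definition c_idx :: "'a::field fps set \<Rightarrow> 'a fps \<Rightarrow> nat \<Rightarrow> nat" where
  "c_idx R x j = (GREATEST i. apery R j \<in> val_set (sum_set (mpow R i) (prin_ideal R x)))"

end

theory Submission
  imports Defs
begin

(* The equivalence of the intersection and the sum conditions does not depend on R: it
   holds for any two k-subspaces V, W of k[[t]] whose intersection contains t^N k[[t]]
   for some N (val_inter_iff_val_sum).  Both directions work by repeatedly cancelling
   leading terms with elements of prescribed valuation; the conductor t^N k[[t]] makes
   the process terminate.

   The first equivalence is a
   reformulation using the maximality of ord and vord.  For the last one we use that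
   v(xR) = e + v(R), so the elements of v(R) outside v(xR) are exactly the Apery
   elements w_j; hence always b_j \<le> c_j, and b_j = c_j says precisely that
   v(m^i + xR) \<subseteq> v(m^i) \<union> v(xR) at the Apery elements. *)

lemma val_set_iff: "u \<in> val_set A \<longleftrightarrow> (\<exists>a\<in>A. a \<noteq> 0 \<and> subdegree a = u)"
  unfolding val_set_def by blast

lemma val_setI: "a \<in> A \<Longrightarrow> a \<noteq> 0 \<Longrightarrow> subdegree a \<in> val_set A"
  unfolding val_set_def by blast

lemma val_set_mono: "A \<subseteq> B \<Longrightarrow> val_set A \<subseteq> val_set B"
  unfolding val_set_def by blast

lemma cancel_leading_term:
  fixes p q :: "'a::field fps"
  assumes p: "p \<noteq> 0" and q: "q \<noteq> 0" and same: "subdegree q = subdegree p"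
  shows "\<exists>c. p - fps_const c * q = 0 \<or> subdegree p < subdegree (p - fps_const c * q)"
proof -
  let ?w = "subdegree p"
  let ?c = "fps_nth p ?w / fps_nth q ?w"
  have q_lead: "fps_nth q ?w \<noteq> 0" using q same by (metis nth_subdegree_nonzero)
  have "fps_nth (p - fps_const ?c * q) i = 0" if "i \<le> ?w" for i
  proof (cases "i = ?w")
    case True
    have "fps_nth (p - fps_const ?c * q) i = fps_nth p ?w - ?c * fps_nth q ?w"
      unfolding True by (simp only: fps_sub_nth fps_mult_left_const_nth)
    also have "\<dots> = 0" using q_lead by (simp add: field_simps)
    finally show ?thesis .
  next
    case False
    then have "i < subdegree p" "i < subdegree q" using that same by linarith+
    then have "fps_nth p i = 0" "fps_nth q i = 0" using nth_less_subdegree_zero by blast+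
    then show ?thesis by (simp only: fps_sub_nth fps_mult_left_const_nth mult_zero_right diff_zero)
  qed
  then have "p - fps_const ?c * q = 0 \<or> ?w < subdegree (p - fps_const ?c * q)"
    using subdegree_greaterI by blast
  then show ?thesis by blast
qed

lemma subdegree_const_mult:
  "fps_const (c::'a::field) * q \<noteq> 0 \<Longrightarrow> subdegree (fps_const c * q) = subdegree q"
  by (cases "c = 0") auto

definition fps_subspace :: "'a::field fps set \<Rightarrow> bool" where
  "fps_subspace V \<longleftrightarrow> 0 \<in> V \<and> (\<forall>a\<in>V. \<forall>b\<in>V. a + b \<in> V) \<and> (\<forall>c. \<forall>a\<in>V. fps_const c * a \<in> V)"

lemma subspace_zero: "fps_subspace V \<Longrightarrow> 0 \<in> V"
  unfolding fps_subspace_def by blast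

lemma subspace_add: "fps_subspace V \<Longrightarrow> a \<in> V \<Longrightarrow> b \<in> V \<Longrightarrow> a + b \<in> V"
  unfolding fps_subspace_def by blast

lemma subspace_smult: "fps_subspace V \<Longrightarrow> a \<in> V \<Longrightarrow> fps_const c * a \<in> V"
  unfolding fps_subspace_def by blast

lemma subspace_uminus: "fps_subspace V \<Longrightarrow> a \<in> V \<Longrightarrow> - a \<in> V"
  using subspace_smult[of V a "-1"] by (simp add: fps_const_neg[symmetric])

lemma subspace_diff: "fps_subspace V \<Longrightarrow> a \<in> V \<Longrightarrow> b \<in> V \<Longrightarrow> a - b \<in> V"
  using subspace_add[of V a "- b"] subspace_uminus[of V b] by simp

(* Write d = a + b; if v(a) = v(b) < v(d), cancel the common leading
   term by an element of V \<inter> W and move it from a to b; v(a) strictly increases. *)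
lemma val_of_sum_in_union:
  assumes V: "fps_subspace V" and W: "fps_subspace W"
    and cap: "val_set V \<inter> val_set W \<subseteq> val_set (V \<inter> W)"
    and d: "d \<noteq> 0" and "a \<in> V" "d - a \<in> W"
  shows "subdegree d \<in> val_set V \<union> val_set W"
  using assms(5,6)
proof (induction a rule: measure_induct_rule[where f = "\<lambda>a. subdegree d - subdegree a"])
  case (less a)
  define b where "b = d - a"
  have ab: "a \<in> V" "b \<in> W" "d = a + b" using less.prems unfolding b_def by simp_all
  let ?w = "subdegree a"
  consider "a = 0" | "b = 0" | "a \<noteq> 0" "b \<noteq> 0" "?w \<noteq> subdegree b"
    | "a \<noteq> 0" "b \<noteq> 0" "subdegree b = ?w" by argo
  then show ?case
  proof cases
    case 1 then show ?thesis using ab d val_setI[of b W] by simp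
  next
    case 2 then show ?thesis using ab d val_setI[of a V] by simp
  next
    case 3
    then have "subdegree d = ?w \<or> subdegree d = subdegree b"
      using ab(3) subdegree_add_eq1[of a b] subdegree_add_eq2[of b a] by (cases "?w < subdegree b") auto
    then show ?thesis using 3 ab val_setI[of a V] val_setI[of b W] by auto
  next
    case 4
    show ?thesis
    proof (cases "subdegree d = ?w")
      case True then show ?thesis using 4 ab(1) val_setI[of a V] by simp
    next
      case False
      have w_lt_d: "?w < subdegree d" using False subdegree_add_ge'[of a b] 4 ab(3) d by simp
      have "?w \<in> val_set V \<inter> val_set W"
        using 4 ab val_setI[of a V] val_setI[of b W] by simp
      then have "?w \<in> val_set (V \<inter> W)" using cap by blast
      then obtain c where c: "c \<in> V" "c \<in> W" "c \<noteq> 0" "subdegree c = ?w"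
        unfolding val_set_iff by blast
      obtain l where l: "a - fps_const l * c = 0 \<or> ?w < subdegree (a - fps_const l * c)"
        using cancel_leading_term[OF 4(1) c(3,4)] by blast
      define a' where "a' = a - fps_const l * c"
      have a'V: "a' \<in> V" unfolding a'_def
        using subspace_diff[OF V ab(1) subspace_smult[OF V c(1)]] .
      have b'W: "d - a' \<in> W" unfolding a'_def
        using subspace_add[OF W ab(2) subspace_smult[OF W c(2)]] by (simp add: ab(3))
      show ?thesis
      proof (cases "a' = 0")
        case True
        then show ?thesis using b'W d val_setI[of d W] by simp
      next
        case False
        then have "?w < subdegree a'" using l unfolding a'_def by blast
        then have "subdegree d - subdegree a' < subdegree d - ?w" using w_lt_d by linarith
        then show ?thesis using less.IH a'V b'W by blast
      qed
    qed
  qed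
qed

lemma val_sum_subset_of_val_inter:
  assumes V: "fps_subspace V" and W: "fps_subspace W"
    and cap: "val_set V \<inter> val_set W \<subseteq> val_set (V \<inter> W)"
  shows "val_set (sum_set V W) \<subseteq> val_set V \<union> val_set W"
proof
  fix u assume "u \<in> val_set (sum_set V W)"
  then obtain a b where "a \<in> V" "b \<in> W" "a + b \<noteq> 0" "subdegree (a + b) = u"
    unfolding val_set_iff sum_set_def by blast
  then show "u \<in> val_set V \<union> val_set W"
    using val_of_sum_in_union[OF V W cap, of "a + b" a] by simp
qed

lemma val_union_subset_val_sum:
  assumes "fps_subspace V" "fps_subspace W"
  shows "val_set V \<union> val_set W \<subseteq> val_set (sum_set V W)"
proof -
  have "V \<subseteq> sum_set V W" "W \<subseteq> sum_set V W"
    unfolding sum_set_def using subspace_zero[OF assms(1)] subspace_zero[OF assms(2)] by force+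
  then show ?thesis using val_set_mono by blast
qed

lemma val_sum_outside:
  assumes "u \<in> val_set (sum_set V W)" "u \<notin> val_set W"
  shows "\<exists>a\<in>V. a \<noteq> 0 \<and> subdegree a \<le> u"
proof -
  obtain a b where ab: "a \<in> V" "b \<in> W" "a + b \<noteq> 0" "subdegree (a + b) = u"
    using assms(1) unfolding val_set_iff sum_set_def by blast
  have "a \<noteq> 0 \<and> \<not> u < subdegree a"
  proof
    show "a \<noteq> 0" using ab assms(2) val_setI[of b W] by auto
    show "\<not> u < subdegree a"
    proof
      assume "u < subdegree a"
      then have "subdegree (a + b - a) = subdegree (a + b)"
        using ab(4) by (intro subdegree_diff_eq1[OF ab(3)]) simp
      then have "b \<noteq> 0" "subdegree b = u" using ab(3,4) \<open>u < subdegree a\<close> by auto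
      then show False using ab(2) assms(2) val_setI[of b W] by simp
    qed
  qed
  then show ?thesis using ab(1) by auto
qed

lemma raise_difference:
  assumes V: "fps_subspace V" and a: "a \<in> V" "a \<noteq> 0" and "a \<noteq> b"
    and a_lt: "subdegree a < subdegree (a - b)" and "subdegree (a - b) \<in> val_set V"
  shows "\<exists>a'\<in>V. a' \<noteq> 0 \<and> subdegree a' = subdegree a \<and>
           (a' = b \<or> subdegree (a - b) < subdegree (a' - b))"
proof -
  define d where "d = a - b"
  have d0: "d \<noteq> 0" using \<open>a \<noteq> b\<close> unfolding d_def by simp
  obtain c where c: "c \<in> V" "c \<noteq> 0" "subdegree c = subdegree d"
    using assms(6) unfolding d_def val_set_iff by blast
  obtain l where l: "d - fps_const l * c = 0 \<or> subdegree d < subdegree (d - fps_const l * c)"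
    using cancel_leading_term[OF d0 c(2,3)] by blast
  define a' where "a' = a - fps_const l * c"
  have a'V: "a' \<in> V" using subspace_diff[OF V a(1) subspace_smult[OF V c(1)]] unfolding a'_def .
  have "a' \<noteq> 0 \<and> subdegree a' = subdegree a"
  proof (cases "fps_const l * c = 0")
    case True then show ?thesis using a(2) unfolding a'_def True by simp
  next
    case False
    then have lt: "subdegree a < subdegree (fps_const l * c)"
      using subdegree_const_mult c(3) a_lt unfolding d_def by simp
    then have "subdegree a' = subdegree a" unfolding a'_def by (rule subdegree_diff_eq1[OF a(2)])
    moreover have "a' \<noteq> 0" using lt unfolding a'_def by auto
    ultimately show ?thesis by blast
  qed
  moreover have "a' - b = d - fps_const l * c" unfolding a'_def d_def by simp
  then have "a' = b \<or> subdegree d < subdegree (a' - b)" using l by (metis right_minus_eq)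
  ultimately show ?thesis using a'V unfolding d_def by blast
qed

lemma improve_close_pair:
  assumes V: "fps_subspace V" and W: "fps_subspace W"
    and ab: "a \<in> V" "b \<in> W" "a \<noteq> 0" "a \<noteq> b" and a_lt: "subdegree a < subdegree (a - b)"
    and "subdegree (a - b) \<in> val_set V \<union> val_set W"
  shows "\<exists>a'\<in>V. \<exists>b'\<in>W. a' \<noteq> 0 \<and> subdegree a' = subdegree a \<and>
           (a' = b' \<or> subdegree (a - b) < subdegree (a' - b'))"
  using assms(8)
proof
  assume "subdegree (a - b) \<in> val_set V"
  then show ?thesis using raise_difference[OF V ab(1,3,4) a_lt] ab(2) by blast
next
  assume "subdegree (a - b) \<in> val_set W"
  have "subdegree (a - (a - b)) = subdegree a" by (rule subdegree_diff_eq1[OF ab(3) a_lt])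
  then have "b \<noteq> 0" "subdegree b < subdegree (b - a)" using a_lt by auto
  then obtain b' where "b' \<in> W" "b' = a \<or> subdegree (b - a) < subdegree (b' - a)"
    using raise_difference[OF W ab(2)] ab(4) \<open>subdegree (a - b) \<in> val_set W\<close> by (metis subdegree_minus_commute)
  then show ?thesis using ab(1,3) by (metis subdegree_minus_commute)
qed

(* Induction on
   N - v(a - b): once v(a - b) \<ge> N, the difference lies in V \<inter> W, so b \<in> V \<inter> W;
   otherwise a - b \<in> V + W and improve_close_pair increases v(a - b). *)
lemma val_inter_of_close_pair:
  assumes V: "fps_subspace V" and W: "fps_subspace W"
    and conductor: "\<And>g. fps_X ^ N * g \<in> V \<inter> W"
    and cup: "val_set (sum_set V W) \<subseteq> val_set V \<union> val_set W"
    and "a \<in> V" "b \<in> W" "a \<noteq> 0" "a = b \<or> subdegree a < subdegree (a - b)"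
  shows "subdegree a \<in> val_set (V \<inter> W)"
  using assms(5-8)
proof (induction "N - subdegree (a - b)" arbitrary: a b rule: less_induct)
  case (less a b)
  show ?case
  proof (cases "a = b")
    case True then show ?thesis using less.prems val_setI[of a "V \<inter> W"] by simp
  next
    case False
    let ?d = "a - b"
    have d0: "?d \<noteq> 0" and a_lt_d: "subdegree a < subdegree ?d" using False less.prems(4) by auto
    show ?thesis
    proof (cases "N \<le> subdegree ?d")
      case True
      have "?d = fps_X ^ N * fps_shift N ?d" using subdegree_decompose'[OF True] by (simp add: mult.commute)
      then have "?d \<in> V" using conductor by (metis IntD1)
      then have "b \<in> V" using subspace_diff[OF V less.prems(1), of ?d] by simp
      moreover have "subdegree (a - ?d) = subdegree a" by (rule subdegree_diff_eq1[OF less.prems(3) a_lt_d])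
      then have "b \<noteq> 0" "subdegree b = subdegree a" using a_lt_d by auto
      ultimately show ?thesis using less.prems(2) val_setI[of b "V \<inter> W"] by simp
    next
      case False
      have "?d = a + - b" by simp
      then have "?d \<in> sum_set V W"
        unfolding sum_set_def using less.prems(1) subspace_uminus[OF W less.prems(2)] by blast
      then have "subdegree ?d \<in> val_set V \<union> val_set W" using cup val_setI d0 by blast
      then obtain a' b' where pair: "a' \<in> V" "b' \<in> W" "a' \<noteq> 0" "subdegree a' = subdegree a"
          "a' = b' \<or> subdegree ?d < subdegree (a' - b')"
        using improve_close_pair[OF V W less.prems(1-3) \<open>a \<noteq> b\<close> a_lt_d] by blast
      show ?thesis
      proof (cases "a' = b'")
        case True then show ?thesis using pair val_setI[of a' "V \<inter> W"] by simp
      next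
        case ne: False
        then have "N - subdegree (a' - b') < N - subdegree ?d"
          using pair(5) \<open>\<not> N \<le> subdegree ?d\<close> by auto
        then show ?thesis using less.hyps[OF _ pair(1-3)] pair(4,5) a_lt_d by auto
      qed
    qed
  qed
qed

lemma val_inter_subset_of_val_sum:
  assumes V: "fps_subspace V" and W: "fps_subspace W"
    and conductor: "\<And>g. fps_X ^ N * g \<in> V \<inter> W"
    and cup: "val_set (sum_set V W) \<subseteq> val_set V \<union> val_set W"
  shows "val_set V \<inter> val_set W \<subseteq> val_set (V \<inter> W)"
proof
  fix u assume "u \<in> val_set V \<inter> val_set W"
  then have "u \<in> val_set V" "u \<in> val_set W" by simp_all
  then obtain a b where a: "a \<in> V" "a \<noteq> 0" "subdegree a = u"
    and b: "b \<in> W" "b \<noteq> 0" "subdegree b = u" unfolding val_set_iff by blast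
  obtain l where l: "a - fps_const l * b = 0 \<or> u < subdegree (a - fps_const l * b)"
    using cancel_leading_term[OF a(2) b(2)] a(3) b(3) by auto
  show "u \<in> val_set (V \<inter> W)"
    using val_inter_of_close_pair[OF V W conductor cup a(1) subspace_smult[OF W b(1)] a(2)] l a(3)
    by simp
qed

lemma val_inter_iff_val_sum:
  assumes V: "fps_subspace V" and W: "fps_subspace W"
    and conductor: "\<And>g. fps_X ^ N * g \<in> V \<inter> W"
  shows "val_set (V \<inter> W) = val_set V \<inter> val_set W \<longleftrightarrow>
         val_set (sum_set V W) = val_set V \<union> val_set W"
proof -
  have inter_le: "val_set (V \<inter> W) \<subseteq> val_set V \<inter> val_set W"
    using val_set_mono[of "V \<inter> W"] by blast
  have sum_ge: "val_set V \<union> val_set W \<subseteq> val_set (sum_set V W)"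
    by (rule val_union_subset_val_sum[OF V W])
  show ?thesis
    using val_sum_subset_of_val_inter[OF V W] val_inter_subset_of_val_sum[OF V W conductor]
      inter_le sum_ge
    by blast
qed

definition R_submodule :: "'a::field fps set \<Rightarrow> 'a fps set \<Rightarrow> bool" where
  "R_submodule R I \<longleftrightarrow> 0 \<in> I \<and> (\<forall>a\<in>I. \<forall>b\<in>I. a + b \<in> I) \<and> (\<forall>c\<in>R. \<forall>a\<in>I. c * a \<in> I)"

lemma R_submoduleI:
  "0 \<in> I \<Longrightarrow> (\<And>a b. a \<in> I \<Longrightarrow> b \<in> I \<Longrightarrow> a + b \<in> I) \<Longrightarrow>
   (\<And>c a. c \<in> R \<Longrightarrow> a \<in> I \<Longrightarrow> c * a \<in> I) \<Longrightarrow> R_submodule R I"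
  unfolding R_submodule_def by blast

lemma R_submodule_multiples: "R_submodule R {a. d dvd a}"
  by (rule R_submoduleI) auto

lemma fps_X_dvd_of_nth_0:
  fixes p :: "'a::field fps"
  assumes "fps_nth p 0 = 0"
  shows "fps_X dvd p"
proof (cases "p = 0")
  case False
  then have "subdegree p \<noteq> 0" using assms subdegree_eq_0_iff[of p] by simp
  then show ?thesis using fps_dvd_iff[OF _ False, of fps_X] by simp
qed simp

context
  fixes R :: "'a::field fps set"
  assumes SR: "setup_ring R"
begin

lemma R_const: "fps_const c \<in> R"
  using SR unfolding setup_ring_def by blast

lemma R_add: "a \<in> R \<Longrightarrow> b \<in> R \<Longrightarrow> a + b \<in> R"
  using SR unfolding setup_ring_def by blast

lemma R_mult: "a \<in> R \<Longrightarrow> b \<in> R \<Longrightarrow> a * b \<in> R"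
  using SR unfolding setup_ring_def by blast

lemma R_conductor: "\<exists>f. f \<noteq> 0 \<and> (\<forall>g. f * g \<in> R)"
  using SR unfolding setup_ring_def by blast

lemma R_submodule_R: "R_submodule R R"
  using R_const[of 0] R_add R_mult by (intro R_submoduleI) simp_all

lemma R_submodule_subspace: "R_submodule R I \<Longrightarrow> fps_subspace I"
  unfolding R_submodule_def fps_subspace_def using R_const by blast

lemma span_least:
  assumes I: "R_submodule R I" and "S \<subseteq> I"
  shows "ideal_span_R R S \<subseteq> I"
proof
  fix a assume "a \<in> ideal_span_R R S"
  then obtain n r s where a: "a = (\<Sum>j<(n::nat). r j * s j)" "\<forall>j<n. r j \<in> R \<and> s j \<in> S"
    unfolding ideal_span_R_def by blast
  have "(\<Sum>j<m. r j * s j) \<in> I" if "m \<le> n" for m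
    using that
  proof (induction m)
    case 0 then show ?case using I unfolding R_submodule_def by simp
  next
    case (Suc m)
    then have "r m \<in> R" "s m \<in> I" using a(2) \<open>S \<subseteq> I\<close> by auto
    then have "r m * s m \<in> I" using I unfolding R_submodule_def by blast
    then show ?case using Suc I unfolding R_submodule_def by simp
  qed
  then show "a \<in> I" using a(1) by blast
qed

lemma span_step:
  assumes "a \<in> ideal_span_R R S" "c \<in> R" "s \<in> S"
  shows "a + c * s \<in> ideal_span_R R S"
proof -
  obtain n r t where a: "a = (\<Sum>j<(n::nat). r j * t j)" "\<forall>j<n. r j \<in> R \<and> t j \<in> S"
    using assms(1) unfolding ideal_span_R_def by blast
  have "a + c * s = (\<Sum>j<Suc n. (r(n := c)) j * (t(n := s)) j)"
    using a(1) by (simp add: lessThan_Suc)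
  moreover have "\<forall>j<Suc n. (r(n := c)) j \<in> R \<and> (t(n := s)) j \<in> S"
    using a(2) assms(2,3) by (auto simp: less_Suc_eq)
  ultimately show ?thesis unfolding ideal_span_R_def by blast
qed

lemma span_zero: "0 \<in> ideal_span_R R S"
  unfolding ideal_span_R_def by (intro CollectI exI[of _ 0]) simp

lemma span_generator: "s \<in> S \<Longrightarrow> s \<in> ideal_span_R R S"
  using span_step[OF span_zero R_const[of 1]] by simp

lemma span_submodule: "R_submodule R (ideal_span_R R S)"
proof (rule R_submoduleI)
  fix a b assume a: "a \<in> ideal_span_R R S" and "b \<in> ideal_span_R R S"
  then obtain n r t where b: "b = (\<Sum>j<(n::nat). r j * t j)" "\<forall>j<n. r j \<in> R \<and> t j \<in> S"
    unfolding ideal_span_R_def by blast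
  have "a + (\<Sum>j<m. r j * t j) \<in> ideal_span_R R S" if "m \<le> n" for m
    using that
  proof (induction m)
    case 0 then show ?case using a by simp
  next
    case (Suc m)
    then show ?case using span_step[OF Suc.IH] b(2) by (simp add: add.assoc)
  qed
  then show "a + b \<in> ideal_span_R R S" using b(1) by blast
next
  fix c a assume "c \<in> R" "a \<in> ideal_span_R R S"
  then obtain n r t where a: "a = (\<Sum>j<(n::nat). r j * t j)" "\<forall>j<n. r j \<in> R \<and> t j \<in> S"
    unfolding ideal_span_R_def by blast
  have "c * a = (\<Sum>j<n. (c * r j) * t j)" using a(1) by (simp add: sum_distrib_left mult.assoc)
  moreover have "\<forall>j<n. c * r j \<in> R \<and> t j \<in> S" using a(2) \<open>c \<in> R\<close> R_mult by auto
  ultimately show "c * a \<in> ideal_span_R R S" unfolding ideal_span_R_def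
    by (intro CollectI exI[of _ n] exI[of _ "\<lambda>j. c * r j"] exI[of _ t]) simp
qed (rule span_zero)

lemma mpow_submodule: "R_submodule R (mpow R i)"
  by (cases i) (simp_all add: R_submodule_R span_submodule)

lemma mpow_Suc_subset: "mpow R (Suc i) \<subseteq> mpow R i"
proof -
  have "{a * b |a b. a \<in> max_ideal R \<and> b \<in> mpow R i} \<subseteq> mpow R i"
    using mpow_submodule[of i] unfolding max_ideal_def R_submodule_def by blast
  then show ?thesis using span_least[OF mpow_submodule] by simp
qed

lemma mpow_antimono: "i \<le> j \<Longrightarrow> mpow R j \<subseteq> mpow R i"
  by (induction j rule: dec_induct) (use mpow_Suc_subset in blast)+

lemma mpow_subset_R: "mpow R i \<subseteq> R"
  using mpow_antimono[of 0 i] by simp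

lemma mpow_dvd: "a \<in> mpow R i \<Longrightarrow> fps_X ^ i dvd a"
proof (induction i arbitrary: a)
  case 0 then show ?case by simp
next
  case (Suc i)
  have "{p * q |p q. p \<in> max_ideal R \<and> q \<in> mpow R i} \<subseteq> {a. fps_X ^ Suc i dvd a}"
  proof clarify
    fix p q assume "p \<in> max_ideal R" "q \<in> mpow R i"
    then have "fps_X dvd p" "fps_X ^ i dvd q"
      using Suc.IH fps_X_dvd_of_nth_0 unfolding max_ideal_def by auto
    then show "fps_X ^ Suc i dvd p * q" by (simp add: mult_dvd_mono)
  qed
  then have "mpow R (Suc i) \<subseteq> {a. fps_X ^ Suc i dvd a}"
    using span_least[OF R_submodule_multiples] by simp
  then show ?case using Suc.prems by blast
qed

lemma mpow_subdegree: "a \<in> mpow R i \<Longrightarrow> a \<noteq> 0 \<Longrightarrow> i \<le> subdegree a"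
  using dvd_imp_subdegree_le[OF mpow_dvd] by fastforce

(* The nonzero conductor makes v(R) contain all large integers. *)
lemma val_R_tail: "\<exists>c. \<forall>n\<ge>c. n \<in> val_set R"
proof -
  obtain f where f: "f \<noteq> 0" "\<forall>g. f * g \<in> R" using R_conductor by blast
  have "n \<in> val_set R" if "subdegree f \<le> n" for n
  proof -
    have "subdegree (f * fps_X ^ (n - subdegree f)) = n"
      using fps_subdegree_mult_fps_X_power(2)[OF f(1)] that by simp
    then show ?thesis using f val_setI[of "f * fps_X ^ (n - subdegree f)" R] by simp
  qed
  then show ?thesis by blast
qed

lemma mult_e_props: "mult_e R \<in> val_set R" "0 < mult_e R"
proof -
  obtain c where "\<forall>n\<ge>c. n \<in> val_set R" using val_R_tail by blast
  then have "\<exists>s. s \<in> val_set R \<and> 0 < s" by (intro exI[of _ "Suc c"]) auto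
  then have "mult_e R \<in> val_set R \<and> 0 < mult_e R" unfolding mult_e_def by (rule LeastI_ex)
  then show "mult_e R \<in> val_set R" "0 < mult_e R" by auto
qed

lemma apery_props:
  assumes "j < mult_e R"
  shows "apery R j \<in> val_set R" "apery R j mod mult_e R = j"
    and "\<And>s. s \<in> val_set R \<Longrightarrow> s mod mult_e R = j \<Longrightarrow> apery R j \<le> s"
proof -
  obtain c where c: "\<forall>n\<ge>c. n \<in> val_set R" using val_R_tail by blast
  have "c \<le> c * mult_e R + j" using mult_e_props(2) by (simp add: trans_le_add1)
  then have "c * mult_e R + j \<in> val_set R \<and> (c * mult_e R + j) mod mult_e R = j"
    using c assms by simp
  then have "apery R j \<in> val_set R \<and> apery R j mod mult_e R = j"
    unfolding apery_def by (rule LeastI)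
  then show "apery R j \<in> val_set R" "apery R j mod mult_e R = j" by auto
  show "\<And>s. s \<in> val_set R \<Longrightarrow> s mod mult_e R = j \<Longrightarrow> apery R j \<le> s"
    unfolding apery_def by (rule Least_le) simp
qed

lemma val_mpow_bound: "u \<in> val_set (mpow R i) \<Longrightarrow> i \<le> u"
  using mpow_subdegree unfolding val_set_iff by blast

lemma val_mpow_antimono: "i \<le> j \<Longrightarrow> val_set (mpow R j) \<subseteq> val_set (mpow R i)"
  using val_set_mono[OF mpow_antimono] .

lemma ord_m_greatest:
  assumes "a \<in> R" "a \<noteq> 0"
  shows "a \<in> mpow R (ord_m R a)" and "\<And>i. a \<in> mpow R i \<Longrightarrow> i \<le> ord_m R a"
proof -
  have bound: "\<And>i. a \<in> mpow R i \<Longrightarrow> i \<le> subdegree a" using mpow_subdegree assms(2) by blast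
  show "a \<in> mpow R (ord_m R a)"
    unfolding ord_m_def by (rule GreatestI_nat[of _ 0, OF _ bound]) (simp add: assms(1))
  show "\<And>i. a \<in> mpow R i \<Longrightarrow> i \<le> ord_m R a"
    unfolding ord_m_def by (rule Greatest_le_nat[OF _ bound])
qed

lemma vord_greatest:
  assumes "s \<in> val_set R"
  shows "s \<in> val_set (mpow R (vord R s))" and "\<And>i. s \<in> val_set (mpow R i) \<Longrightarrow> i \<le> vord R s"
proof -
  have bound: "\<And>i. s \<in> val_set (mpow R i) \<Longrightarrow> i \<le> s" using val_mpow_bound by blast
  show "s \<in> val_set (mpow R (vord R s))"
    unfolding vord_def by (rule GreatestI_nat[of _ 0, OF _ bound]) (simp add: assms)
  show "\<And>i. s \<in> val_set (mpow R i) \<Longrightarrow> i \<le> vord R s"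
    unfolding vord_def by (rule Greatest_le_nat[OF _ bound])
qed

lemma prin_ideal_submodule: "R_submodule R (prin_ideal R y)"
proof (rule R_submoduleI)
  show "0 \<in> prin_ideal R y" unfolding prin_ideal_def using R_const[of 0] by force
  fix a b assume "a \<in> prin_ideal R y" "b \<in> prin_ideal R y"
  then obtain r s where "r \<in> R" "s \<in> R" "a = y * r" "b = y * s" unfolding prin_ideal_def by blast
  moreover have "a + b = y * (r + s)" using \<open>a = y * r\<close> \<open>b = y * s\<close> by (simp add: distrib_left)
  ultimately show "a + b \<in> prin_ideal R y" unfolding prin_ideal_def using R_add by blast
next
  fix c a assume "c \<in> R" "a \<in> prin_ideal R y"
  then obtain r where "r \<in> R" "a = y * r" unfolding prin_ideal_def by blast
  then show "c * a \<in> prin_ideal R y"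
    unfolding prin_ideal_def using R_mult[OF \<open>c \<in> R\<close>] by (auto simp: mult.left_commute)
qed

lemma mpow_subspace: "fps_subspace (mpow R i)"
  by (rule R_submodule_subspace[OF mpow_submodule])

lemma prin_ideal_subspace: "fps_subspace (prin_ideal R y)"
  by (rule R_submodule_subspace[OF prin_ideal_submodule])

end

lemma b_idx_eq_vord: "b_idx R j = vord R (apery R j)"
  unfolding b_idx_def vord_def ..

context
  fixes R :: "'a::field fps set" and x :: "'a fps"
  assumes SR: "setup_ring R" and xR: "x \<in> R" and xe: "subdegree x = mult_e R"
begin

lemma x_nonzero: "x \<noteq> 0"
  using xe mult_e_props(2)[OF SR] by auto

lemma x_power_mpow: "r \<in> R \<Longrightarrow> x ^ i * r \<in> mpow R i"
proof (induction i)
  case 0 then show ?case by simp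
next
  case (Suc i)
  have "x \<in> max_ideal R"
    using xR xe mult_e_props(2)[OF SR] unfolding max_ideal_def by (auto intro!: nth_less_subdegree_zero)
  then have "x * (x ^ i * r) \<in> {a * b |a b. a \<in> max_ideal R \<and> b \<in> mpow R i}"
    using Suc by blast
  then have "x * (x ^ i * r) \<in> mpow R (Suc i)" using span_generator[OF SR] by simp
  then show ?case by (simp add: mult.assoc)
qed

lemma prin_ideal_subset_R: "prin_ideal R x \<subseteq> R"
  unfolding prin_ideal_def using R_mult[OF SR xR] by blast

lemma val_prin_ideal: "u \<in> val_set (prin_ideal R x) \<longleftrightarrow> (\<exists>s\<in>val_set R. u = mult_e R + s)"
proof
  assume "u \<in> val_set (prin_ideal R x)"
  then obtain r where "r \<in> R" "x * r \<noteq> 0" "subdegree (x * r) = u"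
    unfolding val_set_iff prin_ideal_def by blast
  then show "\<exists>s\<in>val_set R. u = mult_e R + s"
    using xe val_setI[of r R] by auto
next
  assume "\<exists>s\<in>val_set R. u = mult_e R + s"
  then obtain s where "s \<in> val_set R" "u = mult_e R + s" by blast
  then obtain r where "r \<in> R" "r \<noteq> 0" "u = mult_e R + subdegree r" unfolding val_set_iff by blast
  then show "u \<in> val_set (prin_ideal R x)"
    using x_nonzero xe val_setI[of "x * r" "prin_ideal R x"] unfolding prin_ideal_def by auto
qed

lemma val_R_add_multiple: "s \<in> val_set R \<Longrightarrow> s + mult_e R * k \<in> val_set R"
proof -
  assume "s \<in> val_set R"
  then obtain a where "a \<in> R" "a \<noteq> 0" "subdegree a = s" unfolding val_set_iff by blast
  moreover have "x ^ k * a \<in> R" using x_power_mpow[OF \<open>a \<in> R\<close>] mpow_subset_R[OF SR] by blast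
  ultimately show ?thesis using x_nonzero xe val_setI[of "x ^ k * a" R] by (simp add: mult.commute)
qed

lemma val_prin_ideal_iff_not_apery:
  assumes s: "s \<in> val_set R"
  shows "s \<in> val_set (prin_ideal R x) \<longleftrightarrow> s \<noteq> apery R (s mod mult_e R)"
proof -
  let ?e = "mult_e R" let ?j = "s mod mult_e R"
  have j: "?j < ?e" using mult_e_props(2)[OF SR] by simp
  show ?thesis
  proof
    assume "s \<in> val_set (prin_ideal R x)"
    then obtain t where t: "t \<in> val_set R" "s = ?e + t" using val_prin_ideal by blast
    then have "apery R ?j \<le> t" using apery_props(3)[OF SR j] by simp
    then show "s \<noteq> apery R ?j" using t(2) mult_e_props(2)[OF SR] by simp
  next
    assume ne: "s \<noteq> apery R ?j"
    then have lt: "apery R ?j < s" using apery_props(3)[OF SR j s] by fastforce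
    have "s mod ?e = apery R ?j mod ?e" using apery_props(2)[OF SR j] by simp
    then have "?e dvd s - apery R ?j" using mod_eq_dvd_iff_nat lt by simp
    then obtain k where "s - apery R ?j = ?e * k" by (rule dvdE)
    then have k: "s = apery R ?j + ?e * k" using lt by simp
    then obtain k' where "k = Suc k'" using lt by (cases k) auto
    then have "s = ?e + (apery R ?j + ?e * k')" using k by simp
    then show "s \<in> val_set (prin_ideal R x)"
      using val_R_add_multiple[OF apery_props(1)[OF SR j]] val_prin_ideal by blast
  qed
qed

lemma apery_not_in_val_prin_ideal: "j < mult_e R \<Longrightarrow> apery R j \<notin> val_set (prin_ideal R x)"
  using val_prin_ideal_iff_not_apery[OF apery_props(1)[OF SR]] apery_props(2)[OF SR] by simp

(* m^i \<inter> xR contains t^N k[[t]]: take N = v(x^(i+1) f) for a conductor element f. *)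
lemma conductor_in_mpow_inter: "\<exists>N. \<forall>g. fps_X ^ N * g \<in> mpow R i \<inter> prin_ideal R x"
proof -
  obtain f where f: "f \<noteq> 0" "\<forall>g. f * g \<in> R" using R_conductor[OF SR] by blast
  define p where "p = x ^ Suc i * f"
  have "p \<noteq> 0" unfolding p_def using f x_nonzero by simp
  have "fps_X ^ subdegree p * g \<in> mpow R i \<inter> prin_ideal R x" for g
  proof (cases "g = 0")
    case False
    then have "p dvd fps_X ^ subdegree p * g"
      using fps_dvd_iff[OF \<open>p \<noteq> 0\<close>] fps_subdegree_mult_fps_X_power(1)[OF False] by simp
    then obtain h where "fps_X ^ subdegree p * g = p * h" by (rule dvdE)
    then have h: "fps_X ^ subdegree p * g = x ^ Suc i * (f * h)" unfolding p_def by (simp add: mult.assoc)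
    have fh: "f * h \<in> R" using f by blast
    have "x ^ Suc i * (f * h) \<in> mpow R i"
      using x_power_mpow[OF fh, of "Suc i"] mpow_Suc_subset[OF SR, of i] by blast
    moreover have "x ^ i * (f * h) \<in> R" using x_power_mpow[OF fh, of i] mpow_subset_R[OF SR] by blast
    then have "x ^ Suc i * (f * h) \<in> prin_ideal R x" unfolding prin_ideal_def by (auto simp: mult.assoc)
    ultimately show ?thesis unfolding h by blast
  qed (use mpow_submodule[OF SR, of i] prin_ideal_submodule[OF SR, of x] in
       \<open>simp add: R_submodule_def\<close>)
  then show ?thesis by blast
qed

(* c_j is an attained maximum, bounded by w_j since w_j is not a value of xR. *)
lemma c_idx_greatest:
  assumes j: "j < mult_e R"
  shows "apery R j \<in> val_set (sum_set (mpow R (c_idx R x j)) (prin_ideal R x))"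
    and "\<And>i. apery R j \<in> val_set (sum_set (mpow R i) (prin_ideal R x)) \<Longrightarrow> i \<le> c_idx R x j"
proof -
  have bound: "i \<le> apery R j" if w: "apery R j \<in> val_set (sum_set (mpow R i) (prin_ideal R x))" for i
  proof -
    obtain a where "a \<in> mpow R i" "a \<noteq> 0" "subdegree a \<le> apery R j"
      using val_sum_outside[OF w apery_not_in_val_prin_ideal[OF j]] by blast
    then show ?thesis using mpow_subdegree[OF SR] by fastforce
  qed
  have "apery R j \<in> val_set (sum_set (mpow R 0) (prin_ideal R x))"
    using apery_props(1)[OF SR j] val_union_subset_val_sum[OF mpow_subspace[OF SR]
        prin_ideal_subspace[OF SR], of 0 x] by auto
  then show "apery R j \<in> val_set (sum_set (mpow R (c_idx R x j)) (prin_ideal R x))"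
    unfolding c_idx_def by (rule GreatestI_nat[OF _ bound])
  show "\<And>i. apery R j \<in> val_set (sum_set (mpow R i) (prin_ideal R x)) \<Longrightarrow> i \<le> c_idx R x j"
    unfolding c_idx_def by (rule Greatest_le_nat[OF _ bound])
qed

(* (1) \<longleftrightarrow> (2): essential divisibility says each u \<in> v(xR) is the value of an element
   of m^(vord u) \<inter> xR, which by the antitonicity of m^i is the intersection condition. *)
lemma ess_divisible_iff_vord_witness:
  "ess_divisible R x \<longleftrightarrow>
     (\<forall>u\<in>val_set (prin_ideal R x). u \<in> val_set (mpow R (vord R u) \<inter> prin_ideal R x))"
proof -
  have "(\<exists>a\<in>prin_ideal R x. a \<noteq> 0 \<and> subdegree a = u \<and> ord_m R a = vord R u) \<longleftrightarrow>
        u \<in> val_set (mpow R (vord R u) \<inter> prin_ideal R x)"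
    if u: "u \<in> val_set (prin_ideal R x)" for u
  proof
    assume "\<exists>a\<in>prin_ideal R x. a \<noteq> 0 \<and> subdegree a = u \<and> ord_m R a = vord R u"
    then obtain a where a: "a \<in> prin_ideal R x" "a \<noteq> 0" "subdegree a = u" "ord_m R a = vord R u"
      by blast
    then have "a \<in> mpow R (vord R u)" using ord_m_greatest(1)[OF SR] prin_ideal_subset_R by force
    then show "u \<in> val_set (mpow R (vord R u) \<inter> prin_ideal R x)"
      using a val_setI[of a] by blast
  next
    assume "u \<in> val_set (mpow R (vord R u) \<inter> prin_ideal R x)"
    then obtain a where a: "a \<in> mpow R (vord R u)" "a \<in> prin_ideal R x" "a \<noteq> 0" "subdegree a = u"
      unfolding val_set_iff by blast
    have aR: "a \<in> R" using a(2) prin_ideal_subset_R by blast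
    have uR: "u \<in> val_set R" using u val_set_mono[OF prin_ideal_subset_R] by blast
    have "vord R u \<le> ord_m R a" using ord_m_greatest(2)[OF SR aR a(3) a(1)] .
    moreover have "u \<in> val_set (mpow R (ord_m R a))"
      using ord_m_greatest(1)[OF SR aR a(3)] a(3,4) val_setI[of a] by blast
    then have "ord_m R a \<le> vord R u" using vord_greatest(2)[OF SR uR] by blast
    ultimately show "\<exists>a\<in>prin_ideal R x. a \<noteq> 0 \<and> subdegree a = u \<and> ord_m R a = vord R u"
      using a by auto
  qed
  then show ?thesis unfolding ess_divisible_def by blast
qed

lemma vord_witness_iff_val_inter:
  "(\<forall>u\<in>val_set (prin_ideal R x). u \<in> val_set (mpow R (vord R u) \<inter> prin_ideal R x)) \<longleftrightarrow>
   (\<forall>i. val_set (mpow R i \<inter> prin_ideal R x) = val_set (mpow R i) \<inter> val_set (prin_ideal R x))"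
proof
  assume wit: "\<forall>u\<in>val_set (prin_ideal R x). u \<in> val_set (mpow R (vord R u) \<inter> prin_ideal R x)"
  show "\<forall>i. val_set (mpow R i \<inter> prin_ideal R x) = val_set (mpow R i) \<inter> val_set (prin_ideal R x)"
  proof
    fix i
    have "u \<in> val_set (mpow R i \<inter> prin_ideal R x)"
      if u: "u \<in> val_set (mpow R i)" "u \<in> val_set (prin_ideal R x)" for u
    proof -
      have "u \<in> val_set R" using u(2) val_set_mono[OF prin_ideal_subset_R] by blast
      then have "mpow R (vord R u) \<subseteq> mpow R i" using vord_greatest(2)[OF SR _ u(1)] mpow_antimono[OF SR] by blast
      then show ?thesis using wit u(2) val_set_mono[of "mpow R (vord R u) \<inter> prin_ideal R x"] by blast
    qed
    then show "val_set (mpow R i \<inter> prin_ideal R x) = val_set (mpow R i) \<inter> val_set (prin_ideal R x)"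
      using val_set_mono[of "mpow R i \<inter> prin_ideal R x"] by blast
  qed
next
  assume "\<forall>i. val_set (mpow R i \<inter> prin_ideal R x) = val_set (mpow R i) \<inter> val_set (prin_ideal R x)"
  then show "\<forall>u\<in>val_set (prin_ideal R x). u \<in> val_set (mpow R (vord R u) \<inter> prin_ideal R x)"
    using vord_greatest(1)[OF SR] val_set_mono[OF prin_ideal_subset_R] by blast
qed

lemma val_inter_iff_val_sum_mpow:
  "(\<forall>i. val_set (mpow R i \<inter> prin_ideal R x) = val_set (mpow R i) \<inter> val_set (prin_ideal R x)) \<longleftrightarrow>
   (\<forall>i. val_set (sum_set (mpow R i) (prin_ideal R x)) = val_set (mpow R i) \<union> val_set (prin_ideal R x))"
proof -
  have "val_set (mpow R i \<inter> prin_ideal R x) = val_set (mpow R i) \<inter> val_set (prin_ideal R x) \<longleftrightarrow>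
        val_set (sum_set (mpow R i) (prin_ideal R x)) = val_set (mpow R i) \<union> val_set (prin_ideal R x)"
    for i
  proof -
    obtain N where "\<forall>g. fps_X ^ N * g \<in> mpow R i \<inter> prin_ideal R x"
      using conductor_in_mpow_inter by blast
    then show ?thesis
      using val_inter_iff_val_sum[OF mpow_subspace[OF SR]
          prin_ideal_subspace[OF SR]] by blast
  qed
  then show ?thesis by blast
qed

(* (3) \<longleftrightarrow> (4): always b_j \<le> c_j; equality for all j is the sum condition, because the
   values of m^i + xR outside v(xR) are Apery elements. *)
lemma b_idx_le_c_idx:
  assumes j: "j < mult_e R"
  shows "b_idx R j \<le> c_idx R x j"
proof -
  have "apery R j \<in> val_set (mpow R (b_idx R j))"
    unfolding b_idx_eq_vord using vord_greatest(1)[OF SR apery_props(1)[OF SR j]] .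
  then have "apery R j \<in> val_set (sum_set (mpow R (b_idx R j)) (prin_ideal R x))"
    using val_union_subset_val_sum[OF mpow_subspace[OF SR]
      prin_ideal_subspace[OF SR]] by blast
  then show ?thesis by (rule c_idx_greatest(2)[OF j])
qed

lemma val_sum_iff_b_eq_c:
  "(\<forall>i. val_set (sum_set (mpow R i) (prin_ideal R x)) = val_set (mpow R i) \<union> val_set (prin_ideal R x)) \<longleftrightarrow>
   (\<forall>j < mult_e R. b_idx R j = c_idx R x j)"
proof
  assume sum_eq: "\<forall>i. val_set (sum_set (mpow R i) (prin_ideal R x)) =
                      val_set (mpow R i) \<union> val_set (prin_ideal R x)"
  show "\<forall>j < mult_e R. b_idx R j = c_idx R x j"
  proof (intro allI impI)
    fix j assume j: "j < mult_e R"
    have "apery R j \<in> val_set (mpow R (c_idx R x j))"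
      using c_idx_greatest(1)[OF j] sum_eq apery_not_in_val_prin_ideal[OF j] by blast
    then have "c_idx R x j \<le> b_idx R j"
      unfolding b_idx_eq_vord using vord_greatest(2)[OF SR apery_props(1)[OF SR j]] by blast
    then show "b_idx R j = c_idx R x j" using b_idx_le_c_idx[OF j] by simp
  qed
next
  assume b_eq_c: "\<forall>j < mult_e R. b_idx R j = c_idx R x j"
  show "\<forall>i. val_set (sum_set (mpow R i) (prin_ideal R x)) = val_set (mpow R i) \<union> val_set (prin_ideal R x)"
  proof
    fix i
    have "u \<in> val_set (mpow R i)"
      if u: "u \<in> val_set (sum_set (mpow R i) (prin_ideal R x))" "u \<notin> val_set (prin_ideal R x)" for u
    proof -
      define j where "j = u mod mult_e R"
      have j: "j < mult_e R" unfolding j_def using mult_e_props(2)[OF SR] by simp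
      have "sum_set (mpow R i) (prin_ideal R x) \<subseteq> R"
        unfolding sum_set_def using mpow_subset_R[OF SR] prin_ideal_subset_R R_add[OF SR] by blast
      then have "u \<in> val_set R" using u(1) val_set_mono by blast
      then have uw: "u = apery R j" using val_prin_ideal_iff_not_apery u(2) unfolding j_def by blast
      then have "i \<le> c_idx R x j" using c_idx_greatest(2)[OF j, of i] u(1) by simp
      moreover have "b_idx R j = c_idx R x j" using b_eq_c j by blast
      ultimately have "i \<le> vord R (apery R j)" unfolding b_idx_eq_vord by simp
      then show ?thesis
        using vord_greatest(1)[OF SR apery_props(1)[OF SR j]] val_mpow_antimono[OF SR] uw by blast
    qed
    then show "val_set (sum_set (mpow R i) (prin_ideal R x)) = val_set (mpow R i) \<union> val_set (prin_ideal R x)"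
      using val_union_subset_val_sum[OF mpow_subspace[OF SR]
          prin_ideal_subspace[OF SR]] by blast
  qed
qed

end

theorem proposition1p2:
  fixes R :: "'a::field fps set" and x :: "'a fps"
  assumes "setup_ring R"
    and "x \<in> R"
    and "subdegree x = mult_e R"
  shows "(ess_divisible R x \<longleftrightarrow>
           (\<forall>i. val_set (mpow R i \<inter> prin_ideal R x) = val_set (mpow R i) \<inter> val_set (prin_ideal R x)))
       \<and> (ess_divisible R x \<longleftrightarrow>
           (\<forall>i. val_set (sum_set (mpow R i) (prin_ideal R x)) = val_set (mpow R i) \<union> val_set (prin_ideal R x)))
       \<and> (ess_divisible R x \<longleftrightarrow> (\<forall>j < mult_e R. b_idx R j = c_idx R x j))"
  by (simp only: ess_divisible_iff_vord_witness[OF assms] vord_witness_iff_val_inter[OF assms]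
      val_inter_iff_val_sum_mpow[OF assms] val_sum_iff_b_eq_c[OF assms] simp_thms)

end
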